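(* Suppose $L_1$ is any linear order isomorphic to a suborder of $U$ and $L_2$ is a countable linear order isomorphic to a suborder of $U$. Then $L_1\cdot_\omega L_2\cong 1$.
   Context: The countable condensation $\sim_\omega$ on a linear order $L$: $x\sim_\omega y$ iff the closed interval between $x$ and $y$ is countable; $L/\!\sim_\omega$ is the linear order of its classes. $L_1L_2$ is the lexicographic product (each element of $L_1$ replaced by a copy of $L_2$), and $L_1\cdot_\omega L_2$ is the order type of $L_1L_2/\!\sim_\omega$. $U$ is the linear order $R^*+\mathbb{Q}+R$, where $R$ is obtained from $\omega_1$ by replacing each $\alpha<\omega_1$ with a point $u_\alpha$ followed by a copy of the rationals, $R^*$ is the reverse of $R$, and the middle summand is a copy of the rationals. *)

theory Defs
  imports "HOL-Library.Countable_Set"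
begin

text \<open>omega_1: a well-ordered type that is uncountable and all of whose proper
  initial segments are countable (this characterises omega_1 up to isomorphism).\<close>
definition is_omega1 :: "'w::wellorder itself \<Rightarrow> bool" where
  "is_omega1 _ \<longleftrightarrow> uncountable (UNIV :: 'w set) \<and> (\<forall>\<alpha>::'w. countable {\<beta>. \<beta> < \<alpha>})"

text \<open>R: each alpha < omega_1 replaced by a point u_alpha (= (alpha, None))
  followed by a copy of the rationals (= (alpha, Some q)).\<close>
type_synonym 'w Rord = "'w \<times> rat option"

definition R_less :: "'w::wellorder Rord \<Rightarrow> 'w Rord \<Rightarrow> bool" where
  "R_less x y \<longleftrightarrow> fst x < fst y \<or>
     (fst x = fst y \<and> (case (snd x, snd y) of
        (None, Some _) \<Rightarrow> True
      | (Some p, Some q) \<Rightarrow> p < q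
      | _ \<Rightarrow> False))"

text \<open>U = R* + Q + R, carried by the sum type Inl (R reversed) + Inr (Inl Q + Inr R).\<close>
type_synonym 'w Uord = "'w Rord + (rat + 'w Rord)"

definition U_less :: "'w::wellorder Uord \<Rightarrow> 'w Uord \<Rightarrow> bool" where
  "U_less x y \<longleftrightarrow> (case (x, y) of
      (Inl a, Inl b) \<Rightarrow> R_less b a
    | (Inl _, Inr _) \<Rightarrow> True
    | (Inr _, Inl _) \<Rightarrow> False
    | (Inr (Inl p), Inr (Inl q)) \<Rightarrow> p < q
    | (Inr (Inl _), Inr (Inr _)) \<Rightarrow> True
    | (Inr (Inr _), Inr (Inl _)) \<Rightarrow> False
    | (Inr (Inr a), Inr (Inr b)) \<Rightarrow> R_less a b)"

definition embeds_in_U :: "'a::linorder itself \<Rightarrow> 'w::wellorder itself \<Rightarrow> bool" where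
  "embeds_in_U _ _ \<longleftrightarrow> (\<exists>f :: 'a \<Rightarrow> 'w Uord. \<forall>x y. x < y \<longrightarrow> U_less (f x) (f y))"

definition lex_less :: "'a::linorder \<times> 'b::linorder \<Rightarrow> 'a \<times> 'b \<Rightarrow> bool" where
  "lex_less x y \<longleftrightarrow> fst x < fst y \<or> (fst x = fst y \<and> snd x < snd y)"

definition lex_le :: "'a::linorder \<times> 'b::linorder \<Rightarrow> 'a \<times> 'b \<Rightarrow> bool" where
  "lex_le x y \<longleftrightarrow> lex_less x y \<or> x = y"

definition sim_omega :: "'a::linorder \<times> 'b::linorder \<Rightarrow> 'a \<times> 'b \<Rightarrow> bool" where
  "sim_omega x y \<longleftrightarrow> countable {z. (lex_le x z \<and> lex_le z y) \<or> (lex_le y z \<and> lex_le z x)}"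

text \<open>The classes of L1 L2 / ~omega (the underlying set of L1 \<cdot>_omega L2).\<close>
definition cond_omega_classes :: "'a::linorder itself \<Rightarrow> 'b::linorder itself \<Rightarrow> ('a \<times> 'b) set set" where
  "cond_omega_classes _ _ = UNIV // {(x, y). sim_omega x y}"

end

theory Submission
  imports Defs
begin

text \<open>Every closed interval of U is countable: an element of the R*-part between x and y has
  rank at most that of x, an element of the R-part has rank at most that of y, and below any
  \<open>\<alpha> < \<omega>\<^sub>1\<close> there are only countably many ranks. Order embeddings reflect this to any
  suborder L1 of U, and an interval of L1 L2 lies in an interval of L1 times the countable L2.
  So all of L1 L2 is one \<open>\<sim>\<^sub>\<omega>\<close>-class.\<close>

definition U_le :: "'w::wellorder Uord \<Rightarrow> 'w Uord \<Rightarrow> bool" where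
  "U_le x y \<longleftrightarrow> U_less x y \<or> x = y"

text \<open>The middle copy of the rationals has no rank; its junk value is irrelevant because
  \<open>U_rank_le\<close> contains that copy regardless of \<open>\<alpha>\<close>.\<close>
definition U_rank :: "'w::wellorder Uord \<Rightarrow> 'w" where
  "U_rank u = (case u of Inl r \<Rightarrow> fst r | Inr (Inl _) \<Rightarrow> undefined | Inr (Inr r) \<Rightarrow> fst r)"

definition U_rank_le :: "'w::wellorder \<Rightarrow> 'w Uord set" where
  "U_rank_le \<alpha> = Inl ` {r. fst r \<le> \<alpha>} \<union> range (Inr \<circ> Inl) \<union> (Inr \<circ> Inr) ` {r. fst r \<le> \<alpha>}"

lemma U_less_irrefl: "\<not> U_less u u"
  unfolding U_less_def R_less_def by (auto split: sum.splits option.splits)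

lemma R_less_imp_fst_le: "R_less r s \<Longrightarrow> fst r \<le> fst s"
  unfolding R_less_def by auto

lemma countable_R_rank_le:
  assumes "is_omega1 TYPE('w::wellorder)"
  shows "countable {r :: 'w Rord. fst r \<le> \<alpha>}"
proof -
  have "countable {\<beta>. \<beta> < \<alpha>}"
    using assms unfolding is_omega1_def by blast
  then have "countable {\<beta>. \<beta> \<le> \<alpha>}"
    by (simp add: le_less Collect_disj_eq)
  then have "countable ({\<beta>. \<beta> \<le> \<alpha>} \<times> (UNIV :: rat option set))"
    by simp
  moreover have "{r :: 'w Rord. fst r \<le> \<alpha>} = {\<beta>. \<beta> \<le> \<alpha>} \<times> UNIV"
    by auto
  ultimately show ?thesis
    by simp
qed

lemma countable_U_rank_le:
  assumes "is_omega1 TYPE('w::wellorder)"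
  shows "countable (U_rank_le (\<alpha> :: 'w))"
  using countable_R_rank_le[OF assms] unfolding U_rank_le_def by simp

lemma U_interval_subset_rank_le:
  assumes "U_le x u" "U_le u y"
  shows "u \<in> U_rank_le (max (U_rank x) (U_rank y))"
proof (cases u)
  case (Inl r)
  then obtain s where "x = Inl s" "R_less r s \<or> r = s"
    using assms(1) unfolding U_le_def U_less_def by (cases x) (auto split: sum.splits)
  moreover from this(2) have "fst r \<le> fst s"
    using R_less_imp_fst_le by blast
  ultimately have "fst r \<le> U_rank x"
    unfolding U_rank_def by simp
  then show ?thesis
    using Inl unfolding U_rank_le_def by (auto simp: le_max_iff_disj)
next
  case (Inr v)
  show ?thesis
  proof (cases v)
    case (Inl q)
    then show ?thesis
      using Inr unfolding U_rank_le_def by auto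
  next
    case (Inr r)
    then obtain s where "y = Inr (Inr s)" "R_less r s \<or> r = s"
      using assms(2) \<open>u = Inr v\<close> unfolding U_le_def U_less_def
      by (cases y) (auto split: sum.splits)
    moreover from this(2) have "fst r \<le> fst s"
      using R_less_imp_fst_le by blast
    ultimately have "fst r \<le> U_rank y"
      unfolding U_rank_def by simp
    then show ?thesis
      using Inr \<open>u = Inr v\<close> unfolding U_rank_le_def by (auto simp: le_max_iff_disj)
  qed
qed

lemma countable_U_interval:
  assumes "is_omega1 TYPE('w::wellorder)"
  shows "countable {u :: 'w Uord. U_le x u \<and> U_le u y}"
proof (rule countable_subset)
  show "{u. U_le x u \<and> U_le u y} \<subseteq> U_rank_le (max (U_rank x) (U_rank y))"
    using U_interval_subset_rank_le by blast
qed (rule countable_U_rank_le[OF assms])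

lemma countable_interval_if_embeds_in_U:
  assumes "is_omega1 TYPE('w::wellorder)" and "embeds_in_U TYPE('a::linorder) TYPE('w)"
  shows "countable {c :: 'a. a \<le> c \<and> c \<le> a'}"
proof -
  obtain f :: "'a \<Rightarrow> 'w Uord" where f: "\<And>x y. x < y \<Longrightarrow> U_less (f x) (f y)"
    using assms(2) unfolding embeds_in_U_def by blast
  have f_le: "U_le (f x) (f y)" if "x \<le> y" for x y
    using f[of x y] that unfolding U_le_def by (cases "x = y") auto
  have "inj f"
  proof (rule injI)
    fix x y
    assume "f x = f y"
    then show "x = y"
      using f[of x y] f[of y x] U_less_irrefl[of "f y"] by (cases x y rule: linorder_cases) auto
  qed
  have "f ` {c. a \<le> c \<and> c \<le> a'} \<subseteq> {u. U_le (f a) u \<and> U_le u (f a')}"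
    using f_le by blast
  then have "countable (f ` {c. a \<le> c \<and> c \<le> a'})"
    using countable_U_interval[OF assms(1)] by (rule countable_subset)
  then show ?thesis
    by (rule countable_image_inj_on[OF _ inj_on_subset[OF \<open>inj f\<close> subset_UNIV]])
qed

lemma sim_omega_if_countable_intervals:
  assumes "\<And>a a' :: 'a::linorder. countable {c. a \<le> c \<and> c \<le> a'}"
    and "countable (UNIV :: 'b::linorder set)"
  shows "sim_omega (x :: 'a \<times> 'b) y"
proof -
  let ?I = "{c. fst x \<le> c \<and> c \<le> fst y} \<union> {c. fst y \<le> c \<and> c \<le> fst x}"
  have "{z. (lex_le x z \<and> lex_le z y) \<or> (lex_le y z \<and> lex_le z x)} \<subseteq> ?I \<times> UNIV"
    unfolding lex_le_def lex_less_def by (auto simp: less_imp_le)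
  moreover have "countable (?I \<times> (UNIV :: 'b set))"
    using assms by simp
  ultimately show ?thesis
    unfolding sim_omega_def by (rule countable_subset)
qed

lemma quotient_full: "A \<noteq> {} \<Longrightarrow> A // (A \<times> A) = {A}"
  unfolding quotient_def by auto

theorem lemma5p3:
  assumes "is_omega1 TYPE('w::wellorder)"
    and "embeds_in_U TYPE('a::linorder) TYPE('w)"
    and "embeds_in_U TYPE('b::linorder) TYPE('w)"
    and "countable (UNIV :: 'b set)"
  shows "card (cond_omega_classes TYPE('a) TYPE('b)) = 1"
proof -
  have "sim_omega x y" for x y :: "'a \<times> 'b"
    using sim_omega_if_countable_intervals countable_interval_if_embeds_in_U[OF assms(1,2)] assms(4)
    by blast
  then have "{(x, y). sim_omega x y} = (UNIV :: ('a \<times> 'b) set) \<times> UNIV"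
    by auto
  then show ?thesis
    unfolding cond_omega_classes_def using quotient_full[of "UNIV :: ('a \<times> 'b) set"] by simp
qed

end
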